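(* Let $G$ be an additive group, let $X$ be a complete non-Archimedean normed space over a field $K$ with a non-trivial non-Archimedean valuation $|\cdot|$, and let $k$ be a fixed integer with $k\neq 0,\pm1$. For $f:G\to X$ put $$Df(x,y)=f(x+ky)+f(x-ky)-k^2f(x+y)-k^2f(x-y)-2(1-k^2)f(x).$$ Let $\varphi:G\times G\to[0,\infty)$, and for $u\in G$ write $$\Phi(u)=\max\{|2(k^2-1)|\varphi(u,u),\ |k^2|\varphi(2u,u),\ \varphi(u,2u),\ \varphi((k+1)u,u),\ \varphi((k-1)u,u),\ \varphi(u,u),\ |k^2|\varphi(2u,2u),\ |2(k^2-1)|\varphi(u,2u),\ \varphi(u,3u),\ \varphi((2k+1)u,u),\ \varphi((2k-1)u,u)\}.$$ Suppose that $$\lim_{n\to\infty}\frac{1}{|8^n|}\max\{\varphi(2^{n+1}x,2^{n+1}y),\ |2|\varphi(2^nx,2^ny)\}=0,\qquad \lim_{n\to\infty}\frac{1}{|8^nk^2(k^2-1)|}\Phi(2^{n-1}x)=0$$ for all $x,y\in G$, and that for each $x\in G$ the limit $$\tilde{\varphi}_C(x):=\lim_{n\to\infty}\max\Big\{\frac{1}{|8^i|}\Phi(2^{i-1}x):\ 0\le i<n\Big\}$$ exists. Suppose that $f:G\to X$ is an odd function satisfying $\|Df(x,y)\|\le\varphi(x,y)$ for all $x,y\in G$. Then there exists a cubic function $C:G\to X$ such that $$\|f(2x)-2f(x)-C(x)\|\le\frac{1}{|8k^2(k^2-1)|}\tilde{\varphi}_C(x)\qquad(x\in G).$$ Moreover,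 if $$\lim_{i\to\infty}\lim_{n\to\infty}\max\Big\{\frac{1}{|8^j|}\Phi(2^{j-1}x):\ i\le j<n+i\Big\}=0,$$ then $C$ is the unique cubic function satisfying this inequality.
   Context: A non-Archimedean norm satisfies $\|x\|=0\iff x=0$, $\|rx\|=|r|\|x\|$ and $\|x+y\|\le\max\{\|x\|,\|y\|\}$. In the proof, $h(x)=f(2x)-2f(x)$ and $C(x)=\lim_{n\to\infty}h(2^nx)/8^n$. *)

theory Defs
  imports Complex_Main
begin

fun nsmul :: "nat \<Rightarrow> 'a::monoid_add \<Rightarrow> 'a" where
  "nsmul 0 x = 0"
| "nsmul (Suc n) x = x + nsmul n x"

definition zsmul :: "int \<Rightarrow> 'a::group_add \<Rightarrow> 'a" where
  "zsmul m x = (if 0 \<le> m then nsmul (nat m) x else - nsmul (nat (- m)) x)"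

definition nonarch_valuation :: "('k::field \<Rightarrow> real) \<Rightarrow> bool" where
  "nonarch_valuation v \<longleftrightarrow>
     (\<forall>r. 0 \<le> v r) \<and> (\<forall>r. v r = 0 \<longleftrightarrow> r = 0) \<and>
     (\<forall>r s. v (r * s) = v r * v s) \<and> (\<forall>r s. v (r + s) \<le> max (v r) (v s))"

definition nontrivial_valuation :: "('k::field \<Rightarrow> real) \<Rightarrow> bool" where
  "nontrivial_valuation v \<longleftrightarrow> (\<exists>r. v r \<noteq> 0 \<and> v r \<noteq> 1)"

definition nonarch_normed_space ::
  "('k::field \<Rightarrow> real) \<Rightarrow> ('k \<Rightarrow> 'x::ab_group_add \<Rightarrow> 'x) \<Rightarrow> ('x \<Rightarrow> real) \<Rightarrow> bool" where
  "nonarch_normed_space v sc nrm \<longleftrightarrow>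
     Vector_Spaces.vector_space sc \<and>
     (\<forall>x. 0 \<le> nrm x) \<and> (\<forall>x. nrm x = 0 \<longleftrightarrow> x = 0) \<and>
     (\<forall>r x. nrm (sc r x) = v r * nrm x) \<and>
     (\<forall>x y. nrm (x + y) \<le> max (nrm x) (nrm y))"

definition norm_complete :: "('x::ab_group_add \<Rightarrow> real) \<Rightarrow> bool" where
  "norm_complete nrm \<longleftrightarrow>
     (\<forall>s::nat \<Rightarrow> 'x. (\<forall>e>0. \<exists>N. \<forall>m\<ge>N. \<forall>n\<ge>N. nrm (s m - s n) < e)
        \<longrightarrow> (\<exists>l. (\<lambda>n. nrm (s n - l)) \<longlonglongrightarrow> 0))"

definition cubic :: "('a::ab_group_add \<Rightarrow> 'x::ab_group_add) \<Rightarrow> bool" where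
  "cubic C \<longleftrightarrow> (\<forall>x y. C (nsmul 2 x + y) + C (nsmul 2 x - y) =
      nsmul 2 (C (x + y)) + nsmul 2 (C (x - y)) + nsmul 12 (C x))"

definition Dop ::
  "('k::field \<Rightarrow> 'x::ab_group_add \<Rightarrow> 'x) \<Rightarrow> int \<Rightarrow> ('a::ab_group_add \<Rightarrow> 'x) \<Rightarrow> 'a \<Rightarrow> 'a \<Rightarrow> 'x" where
  "Dop sc k f x y =
     f (x + zsmul k y) + f (x - zsmul k y)
     - sc (of_int (k^2)) (f (x + y)) - sc (of_int (k^2)) (f (x - y))
     - sc (of_int (2 * (1 - k^2))) (f x)"

definition Phi ::
  "('k::field \<Rightarrow> real) \<Rightarrow> int \<Rightarrow> ('a::ab_group_add \<Rightarrow> 'a \<Rightarrow> real) \<Rightarrow> 'a \<Rightarrow> real" where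
  "Phi v k \<phi> u = Max {
      v (of_int (2 * (k^2 - 1))) * \<phi> u u,
      v (of_int (k^2)) * \<phi> (nsmul 2 u) u,
      \<phi> u (nsmul 2 u),
      \<phi> (zsmul (k + 1) u) u,
      \<phi> (zsmul (k - 1) u) u,
      \<phi> u u,
      v (of_int (k^2)) * \<phi> (nsmul 2 u) (nsmul 2 u),
      v (of_int (2 * (k^2 - 1))) * \<phi> u (nsmul 2 u),
      \<phi> u (nsmul 3 u),
      \<phi> (zsmul (2 * k + 1) u) u,
      \<phi> (zsmul (2 * k - 1) u) u}"

end

theory Submission
  imports Defs
begin

text \<open>
  Write \<open>h(x) = f(2x) - 2f(x)\<close>. Two polynomial identities in \<open>k\<close> carry the argument:
  \<open>k\<^sup>2(k\<^sup>2 - 1)(h(2u) - 8h(u))\<close> is a \<open>\<int>[k]\<close>-combination of nine values of \<open>Df\<close>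
  (for odd \<open>f\<close>), and \<open>4k\<^sup>2(k\<^sup>2 - 1)\<close> times the cubic equation for \<open>C\<close> is a
  \<open>\<int>[k]\<close>-combination of instances of \<open>DC = 0\<close>, oddness of \<open>C\<close> and \<open>C(2x) = 8C(x)\<close>.

  The first identity gives \<open>\<parallel>h(2u) - 8h(u)\<parallel> \<le> \<Phi>(u) / |k\<^sup>2(k\<^sup>2 - 1)|\<close>. By the
  ultrametric inequality the sequence \<open>8\<^sup>-\<^sup>n h(2\<^sup>n x)\<close> is then Cauchy, and its distance from
  \<open>h(x)\<close> is bounded by the largest of its consecutive differences, which yields the estimate. The limit
  \<open>C\<close> is odd, satisfies \<open>C(2x) = 8C(x)\<close>, and inherits \<open>DC = 0\<close> from the first limit
  hypothesis; by the second identity it is cubic. Two cubic approximants satisfy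
  \<open>C(x) - C'(x) = 8\<^sup>-\<^sup>n(C(2\<^sup>n x) - C'(2\<^sup>n x))\<close>, which the tail condition forces to vanish.
\<close>

section \<open>Integer multiples\<close>

lemma nsmul_add: "nsmul (m + n) x = nsmul m x + nsmul n x"
  by (induction m) (auto simp: add.assoc)

lemma nsmul_add_distrib: "nsmul n (x + y) = nsmul n x + nsmul n (y::'a::ab_group_add)"
  by (induction n) (auto simp: algebra_simps)

lemma nsmul_minus: "nsmul n (- x) = - nsmul n (x::'a::ab_group_add)"
  by (induction n) (auto simp: algebra_simps)

lemma nsmul_diff_distrib: "nsmul n (x - y) = nsmul n x - nsmul n (y::'a::ab_group_add)"
  using nsmul_add_distrib[of n x "- y"] nsmul_minus[of n y] by simp

lemma nsmul_mult: "nsmul (m * n) x = nsmul m (nsmul n x)"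
  by (induction m) (auto simp: nsmul_add)

lemma nsmul_zero [simp]: "nsmul n (0::'a::monoid_add) = 0"
  by (induction n) auto

lemma nsmul_pow2_Suc: "nsmul (2 ^ Suc n) x = nsmul 2 (nsmul (2 ^ n) x)"
  using nsmul_mult[of 2 "2 ^ n" x] by simp

lemma (in vector_space) nsmul_eq_scale: "nsmul n x = scale (of_nat n) x"
  by (induction n) (auto simp: scale_left_distrib)

lemma zsmul_of_nat [simp]: "zsmul (int n) x = nsmul n x"
  by (simp add: zsmul_def)

lemma zsmul_numeral [simp]: "zsmul (numeral n) x = nsmul (numeral n) x"
  using zsmul_of_nat[of "numeral n" x] by simp

lemma zsmul_1 [simp]: "zsmul 1 x = x"
  by (simp add: zsmul_def)

lemma zsmul_0 [simp]: "zsmul 0 x = 0"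
  by (simp add: zsmul_def)

lemma zsmul_zero [simp]: "zsmul a (0::'a::ab_group_add) = 0"
  by (simp add: zsmul_def)

lemma zsmul_minus_of_nat: "zsmul (- int n) x = - nsmul n (x::'a::ab_group_add)"
  by (cases "n = 0") (simp_all add: zsmul_def del: nsmul.simps add: nsmul.simps(1))

lemma zsmul_uminus: "zsmul (- a) x = - zsmul a (x::'a::ab_group_add)"
proof (cases a rule: int_cases)
  case (nonneg n)
  then show ?thesis by (simp only: zsmul_minus_of_nat zsmul_of_nat)
next
  case (neg n)
  then have "- a = int (Suc n)" by simp
  then show ?thesis using zsmul_minus_of_nat[of "Suc n" x] zsmul_of_nat[of "Suc n" x] neg
    by (metis minus_minus)
qed

lemma zsmul_add_distrib: "zsmul a (x + y) = zsmul a x + zsmul a (y::'a::ab_group_add)"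
  by (auto simp: zsmul_def nsmul_add_distrib)

lemma zsmul_add_of_nat: "zsmul (a + int n) x = zsmul a x + nsmul n (x::'a::ab_group_add)"
proof (cases a rule: int_cases)
  case (nonneg m)
  then show ?thesis by (metis nsmul_add of_nat_add zsmul_of_nat)
next
  case (neg m)
  have za: "zsmul a x = - nsmul (Suc m) x"
    using neg zsmul_minus_of_nat[of "Suc m" x] by simp
  show ?thesis
  proof (cases "n \<le> Suc m")
    case True
    then have "a + int n = - int (Suc m - n)" using neg by simp
    moreover have "nsmul (Suc m) x = nsmul (Suc m - n) x + nsmul n x"
      using True by (metis le_add_diff_inverse2 nsmul_add)
    ultimately show ?thesis by (simp add: za zsmul_minus_of_nat algebra_simps)
  next
    case False
    then have "a + int n = int (n - Suc m)" using neg by simp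
    moreover have "nsmul n x = nsmul (n - Suc m) x + nsmul (Suc m) x"
      using False by (metis le_add_diff_inverse2 nat_le_linear nsmul_add)
    ultimately show ?thesis by (simp add: za algebra_simps)
  qed
qed

lemma zsmul_add: "zsmul (a + b) x = zsmul a x + zsmul b (x::'a::ab_group_add)"
proof (cases b rule: int_cases)
  case (nonneg n)
  then show ?thesis by (simp add: zsmul_add_of_nat)
next
  case (neg n)
  have shifted: "zsmul (a + b + int (Suc n)) x = zsmul (a + b) x + nsmul (Suc n) x"
    by (rule zsmul_add_of_nat)
  have sum_eq: "a + b + int (Suc n) = a" using neg by simp
  have "zsmul b x = - nsmul (Suc n) x"
    unfolding neg by (rule zsmul_minus_of_nat)
  then show ?thesis using shifted[unfolded sum_eq] by (simp del: nsmul.simps)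
qed

lemma zsmul_diff: "zsmul (a - b) x = zsmul a x - zsmul b (x::'a::ab_group_add)"
  using zsmul_add[of a "- b" x] by (simp add: zsmul_uminus)

lemma zsmul_mult: "zsmul (a * b) x = zsmul a (zsmul b (x::'a::ab_group_add))"
proof -
  have of_nat: "zsmul (int n * b) x = nsmul n (zsmul b x)" for n
    by (induction n) (auto simp: algebra_simps zsmul_add)
  show ?thesis
  proof (cases a rule: int_cases)
    case (nonneg n)
    then show ?thesis using of_nat by simp
  next
    case (neg n)
    then have "a * b = - (int (Suc n) * b)" by (simp only: minus_mult_left)
    then show ?thesis using neg of_nat[of "Suc n"] by (simp only: zsmul_uminus zsmul_of_nat)
  qed
qed

lemma nsmul_zsmul_commute: "nsmul m (zsmul a x) = zsmul a (nsmul m (x::'a::ab_group_add))"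
  by (metis mult.commute zsmul_mult zsmul_of_nat)

section \<open>The operator \<open>D\<close> and cubic functions\<close>

definition doubling_diff ::
  "('k::field \<Rightarrow> 'x::ab_group_add \<Rightarrow> 'x) \<Rightarrow> ('a::ab_group_add \<Rightarrow> 'x) \<Rightarrow> 'a \<Rightarrow> 'x" where
  "doubling_diff sc f x = f (nsmul 2 x) - sc 2 (f x)"

lemma Dop_nsmul: "Dop sc k (\<lambda>z. g (nsmul m z)) x y = Dop sc k g (nsmul m x) (nsmul m y)"
  unfolding Dop_def by (simp add: nsmul_add_distrib nsmul_diff_distrib nsmul_zsmul_commute)

context vector_space
begin

lemma Dop_scale: "Dop scale k (\<lambda>z. scale r (g z)) x y = scale r (Dop scale k g x y)"
  unfolding Dop_def by (simp add: scale_right_diff_distrib scale_right_distrib mult.commute)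

lemma Dop_diff: "Dop scale k (\<lambda>z. g1 z - g2 z) x y = Dop scale k g1 x y - Dop scale k g2 x y"
  unfolding Dop_def by (simp add: scale_right_diff_distrib algebra_simps)

lemma Dop_doubling_diff:
  "Dop scale k (doubling_diff scale f) x y = Dop scale k f (nsmul 2 x) (nsmul 2 y) - scale 2 (Dop scale k f x y)"
  unfolding doubling_diff_def[abs_def] Dop_diff Dop_nsmul Dop_scale ..

lemma odd_at_0:
  fixes g :: "'c::ab_group_add \<Rightarrow> 'b"
  assumes "(2::'a) \<noteq> 0" and "\<And>z. g (- z) = - g z"
  shows "g 0 = 0"
proof -
  have "scale 2 (g 0) = g 0 + g 0"
    using scale_left_distrib[of 1 1 "g 0"] by simp
  also have "\<dots> = 0"
    using assms(2)[of 0] by (simp add: eq_neg_iff_add_eq_0)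
  finally show ?thesis using assms(1) by simp
qed

lemma cubic_nsmul_2:
  assumes "(2::'a) \<noteq> 0" and "cubic g"
  shows "g (nsmul 2 z) = scale 8 (g z)"
proof -
  have "g (nsmul 2 z) + g (nsmul 2 z) = nsmul 2 (g z) + nsmul 2 (g z) + nsmul 12 (g z)"
    using assms(2) unfolding cubic_def by (metis add_0_right diff_zero)
  moreover have "scale 2 (g (nsmul 2 z)) = g (nsmul 2 z) + g (nsmul 2 z)"
    using scale_left_distrib[of 1 1 "g (nsmul 2 z)"] by simp
  moreover have "nsmul 2 (g z) + nsmul 2 (g z) + nsmul 12 (g z) = scale 2 (scale 8 (g z))"
    by (simp add: nsmul_eq_scale flip: scale_left_distrib)
  ultimately have "scale 2 (g (nsmul 2 z)) = scale 2 (scale 8 (g z))"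
    by simp
  then show ?thesis using assms(1) by (simp only: scale_cancel_left) simp
qed

lemma cubic_nsmul_pow2:
  assumes "(2::'a) \<noteq> 0" and "cubic g"
  shows "g (nsmul (2 ^ n) z) = scale (8 ^ n) (g z)"
proof (induction n)
  case (Suc n)
  have "g (nsmul (2 ^ Suc n) z) = scale 8 (g (nsmul (2 ^ n) z))"
    unfolding nsmul_pow2_Suc by (rule cubic_nsmul_2[OF assms])
  then show ?case using Suc by simp
qed simp

end

section \<open>Certificates for identities with coefficients in \<open>\<int>[k]\<close>\<close>

fun padd :: "int list \<Rightarrow> int list \<Rightarrow> int list" where
  "padd [] q = q"
| "padd p [] = p"
| "padd (a # p) (b # q) = (a + b) # padd p q"

fun pmul :: "int list \<Rightarrow> int list \<Rightarrow> int list" where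
  "pmul [] q = []"
| "pmul (a # p) q = padd (map ((*) a) q) (0 # pmul p q)"

fun peval :: "int list \<Rightarrow> int \<Rightarrow> int" where
  "peval [] k = 0"
| "peval (a # p) k = a + k * peval p k"

fun pnorm :: "int list \<Rightarrow> int list" where
  "pnorm [] = []"
| "pnorm (a # p) = (if a = 0 \<and> pnorm p = [] then [] else a # pnorm p)"

lemma peval_padd [simp]: "peval (padd p q) k = peval p k + peval q k"
  by (induction p q rule: padd.induct) (auto simp: algebra_simps)

lemma peval_map_mult [simp]: "peval (map ((*) a) q) k = a * peval q k"
  by (induction q) (auto simp: algebra_simps)

lemma peval_pmul [simp]: "peval (pmul p q) k = peval p k * peval q k"
  by (induction p) (auto simp: algebra_simps)

lemma peval_pnorm [simp]: "peval (pnorm p) k = peval p k"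
proof (induction p)
  case (Cons a p)
  then show ?case
    by (cases "a = 0 \<and> pnorm p = []") (auto simp del: peval.simps simp: peval.simps(2), metis peval.simps(1))
qed simp

text \<open>A coordinate \<open>(a\<^sub>0, a\<^sub>1, b\<^sub>0, b\<^sub>1)\<close> stands for the point
  \<open>(a\<^sub>0 + a\<^sub>1 k) x + (b\<^sub>0 + b\<^sub>1 k) y\<close>; a term \<open>(p, c)\<close> stands for
  \<open>p(k) \<cdot> g(c)\<close>, with \<open>p\<close> an integer polynomial given by its coefficient list.\<close>

type_synonym coord = "int \<times> int \<times> int \<times> int"

definition coord_point :: "int \<Rightarrow> 'a::ab_group_add \<Rightarrow> 'a \<Rightarrow> coord \<Rightarrow> 'a" where
  "coord_point k x y = (\<lambda>(a0, a1, b0, b1). zsmul (a0 + a1 * k) x + zsmul (b0 + b1 * k) y)"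

definition eval_terms ::
  "('k::field \<Rightarrow> 'x::ab_group_add \<Rightarrow> 'x) \<Rightarrow> (coord \<Rightarrow> 'x) \<Rightarrow> int \<Rightarrow> (int list \<times> coord) list \<Rightarrow> 'x" where
  "eval_terms sc w k l = sum_list (map (\<lambda>(p, c). sc (of_int (peval p k)) (w c)) l)"

datatype basic_rel =
    Rel_D int int int int int int
  | Rel_odd int int int int
  | Rel_hom int int int int

text \<open>Each basic relation is a combination of terms that vanishes: \<open>Rel_D a\<^sub>0 a\<^sub>1 b\<^sub>0 b\<^sub>1 c d\<close> is
  \<open>Dg(P, Q)\<close> for \<open>P\<close> the point \<open>(a\<^sub>0, a\<^sub>1, b\<^sub>0, b\<^sub>1)\<close> and \<open>Q = c x + d y\<close>, \<open>Rel_odd\<close>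
  is \<open>g(P) + g(-P)\<close> and \<open>Rel_hom\<close> is \<open>g(2P) - 8 g(P)\<close>.\<close>

fun rel_terms :: "basic_rel \<Rightarrow> (int list \<times> coord) list" where
  "rel_terms (Rel_D a0 a1 b0 b1 c d) =
     [([1], (a0, a1 + c, b0, b1 + d)), ([1], (a0, a1 - c, b0, b1 - d)),
      ([0, 0, -1], (a0 + c, a1, b0 + d, b1)), ([0, 0, -1], (a0 - c, a1, b0 - d, b1)),
      ([-2, 0, 2], (a0, a1, b0, b1))]"
| "rel_terms (Rel_odd a0 a1 b0 b1) = [([1], (a0, a1, b0, b1)), ([1], (- a0, - a1, - b0, - b1))]"
| "rel_terms (Rel_hom a0 a1 b0 b1) = [([1], (2 * a0, 2 * a1, 2 * b0, 2 * b1)), ([-8], (a0, a1, b0, b1))]"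

definition pscale :: "int list \<Rightarrow> (int list \<times> coord) list \<Rightarrow> (int list \<times> coord) list" where
  "pscale c l = map (\<lambda>(p, j). (pmul c p, j)) l"

definition combination :: "(int list \<times> basic_rel) list \<Rightarrow> (int list \<times> coord) list" where
  "combination L = concat (map (\<lambda>(c, r). pscale c (rel_terms r)) L)"

lemma combination_append: "combination (L1 @ L2) = combination L1 @ combination L2"
  by (simp add: combination_def)

text \<open>Collecting like terms by merge sort keeps the certificate checks below fast; the
  correctness of \<open>term_nf\<close> only uses that merging preserves the value of a combination.\<close>

definition coord_key :: "coord \<Rightarrow> int" where
  "coord_key = (\<lambda>(a, b, c, d). ((a * 64 + b) * 64 + c) * 64 + d)"

fun merge_terms :: "(int list \<times> coord) list \<Rightarrow> (int list \<times> coord) list \<Rightarrow> (int list \<times> coord) list" where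
  "merge_terms [] ys = ys"
| "merge_terms xs [] = xs"
| "merge_terms ((p, i) # xs) ((q, j) # ys) =
     (if coord_key i < coord_key j then (p, i) # merge_terms xs ((q, j) # ys)
      else if coord_key j < coord_key i then (q, j) # merge_terms ((p, i) # xs) ys
      else if i = j then (padd p q, i) # merge_terms xs ys
      else (p, i) # (q, j) # merge_terms xs ys)"

fun merge_pairs :: "(int list \<times> coord) list list \<Rightarrow> (int list \<times> coord) list list" where
  "merge_pairs (a # b # r) = merge_terms a b # merge_pairs r"
| "merge_pairs l = l"

lemma length_merge_pairs: "length (merge_pairs l) \<le> length l"
  by (induction l rule: merge_pairs.induct) auto

function merge_all :: "(int list \<times> coord) list list \<Rightarrow> (int list \<times> coord) list" where
  "merge_all [] = []"
| "merge_all [a] = a"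
| "merge_all (a # b # r) = merge_all (merge_pairs (a # b # r))"
  by pat_completeness auto
termination
  by (relation "measure length") (auto simp: le_imp_less_Suc length_merge_pairs)

definition term_nf :: "(int list \<times> coord) list \<Rightarrow> (int list \<times> coord) list" where
  "term_nf l = filter (\<lambda>(p, j). p \<noteq> [])
     (map (\<lambda>(p, j). (pnorm p, j)) (merge_all (map (\<lambda>e. [e]) l)))"

context vector_space
begin

lemma eval_terms_Nil [simp]: "eval_terms scale w k [] = 0"
  by (simp add: eval_terms_def)

lemma eval_terms_Cons [simp]:
  "eval_terms scale w k ((p, j) # l) = scale (of_int (peval p k)) (w j) + eval_terms scale w k l"
  by (simp add: eval_terms_def)

lemma eval_terms_append [simp]:
  "eval_terms scale w k (l1 @ l2) = eval_terms scale w k l1 + eval_terms scale w k l2"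
  by (simp add: eval_terms_def)

lemma eval_terms_merge_terms:
  "eval_terms scale w k (merge_terms xs ys) = eval_terms scale w k xs + eval_terms scale w k ys"
  by (induction xs ys rule: merge_terms.induct) (auto simp: algebra_simps)

lemma eval_terms_merge_all:
  "eval_terms scale w k (merge_all ls) = sum_list (map (eval_terms scale w k) ls)"
proof (induction ls rule: merge_all.induct)
  case (3 a b r)
  have "sum_list (map (eval_terms scale w k) (merge_pairs ls)) = sum_list (map (eval_terms scale w k) ls)"
    for ls
    by (induction ls rule: merge_pairs.induct) (auto simp: eval_terms_merge_terms algebra_simps)
  with 3 show ?case by (simp add: eval_terms_merge_terms)
qed simp_all

lemma eval_terms_nf: "eval_terms scale w k (term_nf l) = eval_terms scale w k l"
proof -
  have "eval_terms scale w k (filter (\<lambda>(p, j). p \<noteq> []) l') = eval_terms scale w k l'" for l'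
    by (induction l') auto
  moreover have "eval_terms scale w k (map (\<lambda>(p, j). (pnorm p, j)) l') = eval_terms scale w k l'" for l'
    by (induction l') auto
  moreover have "sum_list (map (eval_terms scale w k) (map (\<lambda>e. [e]) l)) = eval_terms scale w k l"
    by (induction l) auto
  ultimately show ?thesis by (simp add: term_nf_def eval_terms_merge_all)
qed

lemma eval_terms_pscale:
  "eval_terms scale w k (pscale c l) = scale (of_int (peval c k)) (eval_terms scale w k l)"
  by (induction l) (auto simp: pscale_def scale_right_distrib)

lemma eval_terms_combination:
  "eval_terms scale w k (combination L) =
     (\<Sum>(c, r)\<leftarrow>L. scale (of_int (peval c k)) (eval_terms scale w k (rel_terms r)))"
  unfolding combination_def by (induction L) (auto simp: eval_terms_pscale eval_terms_def[symmetric])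

lemma eval_terms_combination_eq_0:
  assumes "\<And>c r. (c, r) \<in> set L \<Longrightarrow> eval_terms scale w k (rel_terms r) = 0"
  shows "eval_terms scale w k (combination L) = 0"
  using assms unfolding eval_terms_combination by (induction L) fastforce+

lemma eval_Rel_D:
  "eval_terms scale (g \<circ> coord_point k x y) k (rel_terms (Rel_D a0 a1 b0 b1 c d)) =
     Dop scale k g (coord_point k x y (a0, a1, b0, b1)) (zsmul c x + zsmul d y)"
proof -
  have points:
    "coord_point k x y (a0, a1, b0, b1) + zsmul k (zsmul c x + zsmul d y) = coord_point k x y (a0, a1 + c, b0, b1 + d)"
    "coord_point k x y (a0, a1, b0, b1) - zsmul k (zsmul c x + zsmul d y) = coord_point k x y (a0, a1 - c, b0, b1 - d)"
    "coord_point k x y (a0, a1, b0, b1) + (zsmul c x + zsmul d y) = coord_point k x y (a0 + c, a1, b0 + d, b1)"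
    "coord_point k x y (a0, a1, b0, b1) - (zsmul c x + zsmul d y) = coord_point k x y (a0 - c, a1, b0 - d, b1)"
    by (simp_all add: coord_point_def zsmul_add_distrib zsmul_add zsmul_diff algebra_simps
        flip: zsmul_mult)
  show ?thesis
    unfolding Dop_def points by (simp add: power2_eq_square algebra_simps)
qed

lemma eval_Rel_odd:
  assumes "\<And>z. g (- z) = - g z"
  shows "eval_terms scale (g \<circ> coord_point k x y) k (rel_terms (Rel_odd a0 a1 b0 b1)) = 0"
proof -
  have "coord_point k x y (- a0, - a1, - b0, - b1) = - coord_point k x y (a0, a1, b0, b1)"
    by (simp add: coord_point_def zsmul_add zsmul_uminus algebra_simps)
  then show ?thesis by (simp add: assms)
qed

lemma eval_Rel_hom:
  assumes "\<And>z. g (nsmul 2 z) = scale 8 (g z)"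
  shows "eval_terms scale (g \<circ> coord_point k x y) k (rel_terms (Rel_hom a0 a1 b0 b1)) = 0"
proof -
  have "coord_point k x y (2 * a0, 2 * a1, 2 * b0, 2 * b1) = nsmul 2 (coord_point k x y (a0, a1, b0, b1))"
    by (simp add: coord_point_def zsmul_add_distrib zsmul_mult[symmetric] algebra_simps
        flip: zsmul_numeral)
  then show ?thesis by (simp add: assms)
qed

end

definition cubic_certificate :: "(int list \<times> basic_rel) list" where
  "cubic_certificate = [([0,0,(-4)], Rel_D (-2) (-1) (-1) 0 1 2),
    ([0,0,4], Rel_D (-2) (-1) (-2) 0 1 1),
    ([0,0,4], Rel_D (-2) (-1) (-1) (-1) 1 1),
    ([0,0,(-4)], Rel_D (-2) (-1) (-2) (-1) 1 0),
    ([(-2)], Rel_D (-2) (-1) (-1) (-1) 0 1),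
    ([0,0,(-3)], Rel_D (-2) (-1) (-1) 0 1 0),
    ([0,0,3], Rel_D (-2) (-1) (-1) (-1) 1 (-1)),
    ([(-2),0,3], Rel_D (-2) (-1) (-1) 0 1 1),
    ([2,0,(-4)], Rel_D (-2) (-1) (-2) 0 1 0),
    ([1,0,(-3)], Rel_D (-2) (-1) (-1) (-1) 1 0),
    ([(-1),0,4], Rel_D (-2) (-1) (-2) (-1) 1 (-1)),
    ([2,0,(-7)], Rel_D (-2) 0 (-1) (-1) 0 1),
    ([(-2)], Rel_D (-2) (-1) (-1) 1 0 1),
    ([2], Rel_D (-2) (-1) (-1) 0 0 2),
    ([(-2)], Rel_D (-2) (-1) (-2) 0 0 1),
    ([1], Rel_D (-2) (-1) (-1) 1 1 0),
    ([(-2),0,4], Rel_D (-2) (-1) (-1) 0 1 (-1)),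
    ([1], Rel_D (-2) (-1) (-1) 1 1 2),
    ([(-1)], Rel_D (-2) (-1) (-2) 1 1 1),
    ([4,0,(-8)], Rel_D (-2) 0 (-1) 0 0 1),
    ([(-2),0,4], Rel_D (-2) 0 (-1) 0 0 2),
    ([2,0,(-4)], Rel_D (-2) 0 (-2) 0 0 1),
    ([2], Rel_D (-2) 0 (-1) 1 0 1),
    ([(-1)], Rel_D (-2) 0 (-1) 1 0 2),
    ([1], Rel_D (-2) 0 (-2) 1 0 1),
    ([0,0,(-1)], Rel_D (-2) (-1) 0 (-1) 1 1),
    ([(-1),0,3], Rel_D (-2) (-1) 0 (-1) 1 (-1)),
    ([1,0,(-4)], Rel_D (-2) (-1) (-1) (-1) 1 (-2)),
    ([(-1),0,4], Rel_D (-2) 0 (-1) (-1) 0 2),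
    ([1,0,(-4)], Rel_D (-2) 0 (-2) (-1) 0 1),
    ([0,0,3], Rel_D (-2) (-1) 0 0 1 1),
    ([0,0,(-3)], Rel_D (-2) (-1) 0 (-1) 1 0),
    ([2,0,(-3)], Rel_D (-2) (-1) 0 0 1 0),
    ([(-1)], Rel_D (-2) (-1) 0 1 1 1),
    ([(-2)], Rel_D (-2) (-1) 0 0 0 1),
    ([0,0,(-2)], Rel_D (-2) 0 0 (-1) 0 1),
    ([1,0,(-1)], Rel_D (-2) 0 0 0 0 2),
    ([0,0,1], Rel_D (-2) (-1) 0 0 1 2),
    ([0,0,(-1)], Rel_D (-2) (-1) 1 0 1 1),
    ([0,0,1], Rel_D (-2) (-1) 1 (-1) 1 0),
    ([0,0,1], Rel_D (-2) 0 1 (-1) 0 1),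
    ([0,0,1], Rel_D (-2) (-1) 1 0 1 0),
    ([0,0,(-1)], Rel_D (-2) (-1) 0 0 1 (-1)),
    ([0,0,(-1)], Rel_D (-2) (-1) 1 (-1) 1 (-1)),
    ([0,0,1], Rel_D (-2) (-1) 0 (-1) 1 (-2)),
    ([0,0,(-1)], Rel_D (-2) 0 0 (-1) 0 2),
    ([0,0,1,0,(-1)], Rel_hom (-1) 0 (-1) 0),
    ([0,0,(-4),0,4], Rel_odd (-2) 0 (-1) 0),
    ([0,0,6,0,(-6)], Rel_hom (-1) 0 0 0),
    ([0,0,(-4),0,4], Rel_odd (-2) 0 1 0),
    ([0,0,1,0,(-1)], Rel_hom (-1) 0 1 0),
    ([0,0,8,0,(-8)], Rel_odd (-1) 0 (-1) 0),
    ([0,0,48,0,(-48)], Rel_odd (-1) 0 0 0),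
    ([0,0,8,0,(-8)], Rel_odd (-1) 0 1 0)]"

definition cubic_equation_terms :: "(int list \<times> coord) list" where
  "cubic_equation_terms =
     [([1], (2, 0, 1, 0)), ([1], (2, 0, -1, 0)), ([-2], (1, 0, 1, 0)), ([-2], (1, 0, -1, 0)),
      ([-12], (1, 0, 0, 0))]"

lemma cubic_certificate_correct:
  "term_nf (combination cubic_certificate) = term_nf (pscale [0, 0, -4, 0, 4] cubic_equation_terms)"
  by code_simp

lemma cubicI:
  fixes sc :: "'k::field \<Rightarrow> 'x::ab_group_add \<Rightarrow> 'x" and C :: "'a::ab_group_add \<Rightarrow> 'x"
  assumes "vector_space sc" and two: "(2::'k) \<noteq> 0"
    and kk: "(of_int (k^2 * (k^2 - 1)) :: 'k) \<noteq> 0"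
    and odd: "\<And>x. C (- x) = - C x" and hom: "\<And>x. C (nsmul 2 x) = sc 8 (C x)"
    and Dop_eq_0: "\<And>x y. Dop sc k C x y = 0"
  shows "cubic C"
  unfolding cubic_def
proof (intro allI)
  interpret vector_space sc by fact
  fix x y :: 'a
  let ?w = "C \<circ> coord_point k x y"
  have "eval_terms sc ?w k (rel_terms r) = 0" for r
    by (induction r) (simp_all only: eval_Rel_D Dop_eq_0 eval_Rel_odd eval_Rel_hom odd hom)
  then have "eval_terms sc ?w k (combination cubic_certificate) = 0"
    by (intro eval_terms_combination_eq_0)
  then have "eval_terms sc ?w k (pscale [0, 0, -4, 0, 4] cubic_equation_terms) = 0"
    by (metis eval_terms_nf cubic_certificate_correct)
  then have "sc (of_int (peval [0, 0, -4, 0, 4] k)) (eval_terms sc ?w k cubic_equation_terms) = 0"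
    by (simp only: eval_terms_pscale)
  moreover have "(of_int (peval [0, 0, -4, 0, 4] k) :: 'k) = (2 * 2) * of_int (k^2 * (k^2 - 1))"
    by (simp add: algebra_simps power2_eq_square power4_eq_xxxx)
  then have "(of_int (peval [0, 0, -4, 0, 4] k) :: 'k) \<noteq> 0"
    using two kk by (simp only: mult_eq_0_iff) simp
  ultimately have "eval_terms sc ?w k cubic_equation_terms = 0"
    by simp
  moreover have "zsmul (- 1) z = - z" for z :: 'a
    using zsmul_uminus[of 1 z] by simp
  ultimately show "C (nsmul 2 x + y) + C (nsmul 2 x - y) =
      nsmul 2 (C (x + y)) + nsmul 2 (C (x - y)) + nsmul 12 (C x)"
    by (simp add: cubic_equation_terms_def coord_point_def nsmul_eq_scale algebra_simps)
qed

definition step_certificate_D :: "(int list \<times> basic_rel) list" where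
  "step_certificate_D = [([(-3),0,4], Rel_D 1 0 0 0 1 0),
    ([0,0,(-2)], Rel_D 2 0 0 0 1 0),
    ([0,0,2], Rel_D 1 0 0 0 2 0),
    ([(-2)], Rel_D 1 1 0 0 1 0),
    ([2], Rel_D (-1) 1 0 0 1 0),
    ([0,0,(-1)], Rel_D 2 0 0 0 2 0),
    ([1], Rel_D 1 0 0 0 3 0),
    ([(-1)], Rel_D 1 2 0 0 1 0),
    ([1], Rel_D (-1) 2 0 0 1 0)]"

definition step_certificate_odd :: "(int list \<times> basic_rel) list" where
  "step_certificate_odd = [([0,0,1], Rel_odd (-2) 0 0 0),
    ([0,0,2], Rel_odd (-2) 1 0 0),
    ([0,0,1], Rel_odd (-2) 2 0 0),
    ([(-2),0,0,0,2], Rel_odd (-1) 0 0 0),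
    ([3,0,(-4)], Rel_odd (-1) 1 0 0),
    ([0,0,(-2)], Rel_odd (-1) 2 0 0),
    ([(-1)], Rel_odd (-1) 3 0 0)]"

definition step_target_terms :: "(int list \<times> coord) list" where
  "step_target_terms = [([1], (4, 0, 0, 0)), ([-10], (2, 0, 0, 0)), ([16], (1, 0, 0, 0)), ([-3], (0, 0, 0, 0))]"

lemma step_certificate_correct:
  "term_nf (combination (step_certificate_D @ step_certificate_odd)) =
     term_nf (pscale [0, 0, -1, 0, 1] step_target_terms)"
  by code_simp

lemma doubling_diff_step_eq:
  fixes sc :: "'k::field \<Rightarrow> 'x::ab_group_add \<Rightarrow> 'x" and f :: "'a::ab_group_add \<Rightarrow> 'x"
  assumes "vector_space sc" and two: "(2::'k) \<noteq> 0" and odd: "\<And>x. f (- x) = - f x"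
  shows "sc (of_int (k^2 * (k^2 - 1))) (doubling_diff sc f (nsmul 2 u) - sc 8 (doubling_diff sc f u)) =
      sc (of_int (4 * k^2 - 3)) (Dop sc k f u u) + sc (of_int (- 2 * k^2)) (Dop sc k f (nsmul 2 u) u)
      + sc (of_int (2 * k^2)) (Dop sc k f u (nsmul 2 u)) + sc (of_int (- 2)) (Dop sc k f (zsmul (k + 1) u) u)
      + sc (of_int 2) (Dop sc k f (zsmul (k - 1) u) u) + sc (of_int (- (k^2))) (Dop sc k f (nsmul 2 u) (nsmul 2 u))
      + Dop sc k f u (nsmul 3 u) - Dop sc k f (zsmul (2 * k + 1) u) u + Dop sc k f (zsmul (2 * k - 1) u) u"
proof -
  interpret vector_space sc by fact
  let ?w = "f \<circ> coord_point k u 0"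
  have "eval_terms sc ?w k (combination step_certificate_odd) = 0"
    by (intro eval_terms_combination_eq_0) (auto simp: step_certificate_odd_def eval_Rel_odd odd simp del: rel_terms.simps)
  then have "eval_terms sc ?w k (combination step_certificate_D) =
      eval_terms sc ?w k (pscale [0, 0, -1, 0, 1] step_target_terms)"
    by (metis eval_terms_nf step_certificate_correct combination_append eval_terms_append add_0_right)
  moreover have "eval_terms sc ?w k (pscale [0, 0, -1, 0, 1] step_target_terms) =
      sc (of_int (k^2 * (k^2 - 1))) (doubling_diff sc f (nsmul 2 u) - sc 8 (doubling_diff sc f u))"
  proof -
    have "sc 2 (f (nsmul 2 u)) + sc 8 (f (nsmul 2 u)) = sc 10 (f (nsmul 2 u))"
      using scale_left_distrib[of 2 8 "f (nsmul 2 u)"] by simp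
    then have step: "doubling_diff sc f (nsmul 2 u) - sc 8 (doubling_diff sc f u) =
        f (nsmul 4 u) - sc 10 (f (nsmul 2 u)) + sc 16 (f u)"
      by (simp add: doubling_diff_def scale_right_diff_distrib algebra_simps flip: nsmul_mult)
    show ?thesis
      unfolding step using odd_at_0[where g = f, OF two odd]
      by (simp add: eval_terms_pscale step_target_terms_def coord_point_def algebra_simps
          power2_eq_square)
  qed
  moreover have "eval_terms sc ?w k (combination step_certificate_D) =
      sc (of_int (4 * k^2 - 3)) (Dop sc k f u u) + sc (of_int (- 2 * k^2)) (Dop sc k f (nsmul 2 u) u)
      + sc (of_int (2 * k^2)) (Dop sc k f u (nsmul 2 u)) + sc (of_int (- 2)) (Dop sc k f (zsmul (k + 1) u) u)
      + sc (of_int 2) (Dop sc k f (zsmul (k - 1) u) u) + sc (of_int (- (k^2))) (Dop sc k f (nsmul 2 u) (nsmul 2 u))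
      + Dop sc k f u (nsmul 3 u) - Dop sc k f (zsmul (2 * k + 1) u) u + Dop sc k f (zsmul (2 * k - 1) u) u"
    unfolding eval_terms_combination step_certificate_D_def
    by (simp only: list.map prod.case sum_list_simps eval_Rel_D)
      (simp add: coord_point_def algebra_simps power2_eq_square)
  ultimately show ?thesis by simp
qed

section \<open>Non-Archimedean valuations and norms\<close>

lemma eight_neq_zero:
  assumes "(2::'a::field) \<noteq> 0"
  shows "(8::'a) \<noteq> 0"
proof -
  have "(2 * 2 * 2 :: 'a) \<noteq> 0" using assms by (simp only: mult_eq_0_iff) simp
  then show ?thesis by simp
qed

locale nonarch_valued =
  fixes v :: "'k::field \<Rightarrow> real"
  assumes val: "nonarch_valuation v"
begin

lemma val_nonneg: "0 \<le> v r"
  and val_eq_0_iff: "v r = 0 \<longleftrightarrow> r = 0"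
  and val_mult: "v (r * s) = v r * v s"
  and val_add_le: "v (r + s) \<le> max (v r) (v s)"
  using val unfolding nonarch_valuation_def by auto

lemma val_zero [simp]: "v 0 = 0"
  by (simp add: val_eq_0_iff)

lemma val_pos: "r \<noteq> 0 \<Longrightarrow> 0 < v r"
  using val_nonneg[of r] val_eq_0_iff[of r] by linarith

lemma val_one [simp]: "v 1 = 1"
proof -
  have "v 1 = v 1 * v 1" using val_mult[of 1 1] by simp
  moreover have "v 1 \<noteq> 0" using val_eq_0_iff[of 1] by simp
  ultimately show ?thesis by (metis mult_cancel_left1)
qed

lemma val_minus [simp]: "v (- r) = v r"
proof -
  have "v (- 1) * v (- 1) = 1"
    using val_mult[of "- 1" "- 1"] by simp
  then have "(v (- 1) - 1) * (v (- 1) + 1) = 0"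
    by (simp add: algebra_simps)
  then have "v (- 1) = 1"
    using val_nonneg[of "- 1"] by simp
  then show ?thesis using val_mult[of "- 1" r] by simp
qed

lemma val_of_nat_le: "v (of_nat n) \<le> 1"
proof (induction n)
  case (Suc n)
  then show ?case using val_add_le[of 1 "of_nat n"] by simp
qed simp

lemma val_of_int_le: "v (of_int n) \<le> 1"
proof (cases n rule: int_cases)
  case (neg m)
  then have "(of_int n :: 'k) = - of_nat (Suc m)" by simp
  then show ?thesis using val_of_nat_le[of "Suc m"] val_minus[of "1 + of_nat m"] by simp
qed (simp add: val_of_nat_le)

lemma val_power: "v (r ^ n) = v r ^ n"
  by (induction n) (simp_all add: val_mult)

lemma val_divide_1: "v (1 / r) = 1 / v r"
proof (cases "r = 0")
  case False
  then have "v (1 / r) * v r = 1"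
    using val_mult[of "1 / r" r] by simp
  moreover have "v r \<noteq> 0" using False val_eq_0_iff by simp
  ultimately show ?thesis by (simp add: field_simps)
qed simp

end

locale nonarch_normed = nonarch_valued v
  for v :: "'k::field \<Rightarrow> real" +
  fixes sc :: "'k \<Rightarrow> 'x::ab_group_add \<Rightarrow> 'x" and nrm :: "'x \<Rightarrow> real"
  assumes space: "nonarch_normed_space v sc nrm"
begin

sublocale vector_space sc
  using space by (simp add: nonarch_normed_space_def)

lemma nrm_nonneg: "0 \<le> nrm x"
  and nrm_eq_0_iff: "nrm x = 0 \<longleftrightarrow> x = 0"
  and nrm_scale: "nrm (sc r x) = v r * nrm x"
  and nrm_add_le_max: "nrm (x + y) \<le> max (nrm x) (nrm y)"
  using space unfolding nonarch_normed_space_def by auto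

lemma nrm_zero [simp]: "nrm 0 = 0"
  by (simp add: nrm_eq_0_iff)

lemma nrm_minus [simp]: "nrm (- x) = nrm x"
  using nrm_scale[of "- 1" x] by simp

lemma nrm_commute: "nrm (x - y) = nrm (y - x)"
  using nrm_minus[of "x - y"] by simp

lemma nrm_add_le: "nrm x \<le> M \<Longrightarrow> nrm y \<le> M \<Longrightarrow> nrm (x + y) \<le> M"
  using nrm_add_le_max[of x y] by simp

lemma nrm_diff_le: "nrm x \<le> M \<Longrightarrow> nrm y \<le> M \<Longrightarrow> nrm (x - y) \<le> M"
  using nrm_add_le[of x M "- y"] by simp

lemma nrm_triangle: "nrm (x - z) \<le> max (nrm (x - y)) (nrm (y - z))"
  using nrm_add_le_max[of "x - y" "y - z"] by simp

lemma nrm_scale_of_int_le: "nrm (sc (of_int c) x) \<le> nrm x"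
  using mult_right_mono[OF val_of_int_le nrm_nonneg] by (simp add: nrm_scale)

lemma nrm_scale_of_int_dvd_le:
  assumes "d dvd c"
  shows "nrm (sc (of_int c) x) \<le> v (of_int d) * nrm x"
proof -
  obtain e where "c = e * d" using assms by (metis dvd_def mult.commute)
  then have "nrm (sc (of_int c) x) = v (of_int e) * (v (of_int d) * nrm x)"
    by (simp add: nrm_scale val_mult)
  also have "\<dots> \<le> v (of_int d) * nrm x"
    using mult_right_mono[OF val_of_int_le[of e], of "v (of_int d) * nrm x"]
    by (simp add: val_nonneg nrm_nonneg)
  finally show ?thesis .
qed

lemma nrm_eq_0_if_le_null:
  assumes "\<And>n. nrm z \<le> e n" and "e \<longlonglongrightarrow> 0"
  shows "z = 0"
  using LIMSEQ_le_const[OF assms(2)] assms(1) nrm_nonneg[of z] nrm_eq_0_iff[of z] by force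

definition nrm_limit :: "(nat \<Rightarrow> 'x) \<Rightarrow> 'x \<Rightarrow> bool" where
  "nrm_limit s l \<longleftrightarrow> (\<lambda>n. nrm (s n - l)) \<longlonglongrightarrow> 0"

lemma nrm_limit_max:
  assumes "nrm_limit s a" and "nrm_limit t b"
  shows "(\<lambda>n. max (nrm (s n - a)) (nrm (t n - b))) \<longlonglongrightarrow> 0"
  using tendsto_max[OF assms[unfolded nrm_limit_def]] by simp

lemma nrm_limit_le_max:
  assumes "nrm_limit s a" and "nrm_limit t b"
    and "\<And>n. nrm (u n - c) \<le> max (nrm (s n - a)) (nrm (t n - b))"
  shows "nrm_limit u c"
  unfolding nrm_limit_def
  by (rule tendsto_sandwich[OF _ _ tendsto_const nrm_limit_max[OF assms(1,2)]])
    (simp_all add: nrm_nonneg assms(3))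

lemma nrm_limit_unique:
  assumes "nrm_limit s a" and "nrm_limit s b"
  shows "a = b"
proof -
  have "nrm (a - b) \<le> max (nrm (s n - a)) (nrm (s n - b))" for n
    using nrm_triangle[of a b "s n"] nrm_commute[of a "s n"] by simp
  then have "a - b = 0"
    by (rule nrm_eq_0_if_le_null[OF _ nrm_limit_max[OF assms]])
  then show ?thesis by simp
qed

lemma nrm_limit_add:
  assumes "nrm_limit s a" and "nrm_limit t b"
  shows "nrm_limit (\<lambda>n. s n + t n) (a + b)"
  by (rule nrm_limit_le_max[OF assms]) (simp add: add_diff_add nrm_add_le_max)

lemma nrm_limit_uminus: "nrm_limit s a \<Longrightarrow> nrm_limit (\<lambda>n. - s n) (- a)"
proof -
  have "nrm (- s n - - a) = nrm (s n - a)" for n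
    using nrm_minus[of "s n - a"] by (simp only: minus_diff_eq minus_diff_minus)
  then show "nrm_limit s a \<Longrightarrow> nrm_limit (\<lambda>n. - s n) (- a)"
    unfolding nrm_limit_def by simp
qed

lemma nrm_limit_diff:
  "nrm_limit s a \<Longrightarrow> nrm_limit t b \<Longrightarrow> nrm_limit (\<lambda>n. s n - t n) (a - b)"
  using nrm_limit_add[of s a "\<lambda>n. - t n" "- b"] nrm_limit_uminus[of t b] by simp

lemma nrm_limit_scale: "nrm_limit s a \<Longrightarrow> nrm_limit (\<lambda>n. sc r (s n)) (sc r a)"
  unfolding nrm_limit_def
  by (simp add: nrm_scale tendsto_mult_right_zero flip: scale_right_diff_distrib)

lemma nrm_limit_Suc: "nrm_limit s a \<Longrightarrow> nrm_limit (\<lambda>n. s (Suc n)) a"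
  unfolding nrm_limit_def by (rule LIMSEQ_Suc)

lemma nrm_limit_le:
  assumes "nrm_limit s l" and bound: "\<And>n. nrm (s n - a) \<le> B"
  shows "nrm (a - l) \<le> B"
proof -
  have "(\<lambda>n. max B (nrm (s n - l))) \<longlonglongrightarrow> max B 0"
    using assms(1) unfolding nrm_limit_def by (intro tendsto_max tendsto_const)
  moreover have "nrm (a - l) \<le> max B (nrm (s n - l))" for n
    using nrm_triangle[of a l "s n"] nrm_commute[of a "s n"] bound[of n] by simp
  ultimately have "nrm (a - l) \<le> max B 0"
    by (intro LIMSEQ_le_const) auto
  moreover have "0 \<le> B"
    using bound[of 0] nrm_nonneg[of "s 0 - a"] by linarith
  ultimately show ?thesis by simp
qed

lemma nrm_telescope:
  assumes "m \<le> n" and "\<And>i. m \<le> i \<Longrightarrow> i < n \<Longrightarrow> nrm (s (Suc i) - s i) \<le> e" and "0 \<le> e"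
  shows "nrm (s n - s m) \<le> e"
  using assms
proof (induction n rule: dec_induct)
  case (step n)
  have "s (Suc n) - s m = (s (Suc n) - s n) + (s n - s m)" by simp
  moreover have "nrm (s (Suc n) - s n) \<le> e" and "nrm (s n - s m) \<le> e"
    using step by simp_all
  ultimately show ?case by (simp only: nrm_add_le)
qed simp

lemma nrm_limit_exists:
  assumes complete: "norm_complete nrm" and steps: "(\<lambda>n. nrm (s (Suc n) - s n)) \<longlonglongrightarrow> 0"
  shows "\<exists>l. nrm_limit s l"
proof -
  have "\<exists>N. \<forall>m\<ge>N. \<forall>n\<ge>N. nrm (s m - s n) < e" if "0 < e" for e
  proof -
    have "0 < e / 2" using \<open>0 < e\<close> by simp
    then obtain N where N0: "\<forall>i\<ge>N. norm (nrm (s (Suc i) - s i) - 0) < e / 2"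
      using LIMSEQ_D[OF steps] by blast
    have N: "nrm (s (Suc i) - s i) \<le> e / 2" if "N \<le> i" for i
    proof -
      have "norm (nrm (s (Suc i) - s i) - 0) < e / 2" using N0 that by blast
      then show ?thesis using nrm_nonneg[of "s (Suc i) - s i"] by simp
    qed
    have ordered: "nrm (s n - s m) \<le> e / 2" if "N \<le> m" "m \<le> n" for m n
      by (rule nrm_telescope[OF that(2)]) (use N that(1) \<open>0 < e / 2\<close> in simp_all)
    have "nrm (s m - s n) \<le> e / 2" if "N \<le> m" "N \<le> n" for m n
      using ordered[of m n] ordered[of n m] that nrm_commute[of "s m" "s n"] by linarith
    then have "nrm (s m - s n) < e" if "N \<le> m" "N \<le> n" for m n
      using that \<open>0 < e\<close> by fastforce
    then show ?thesis by blast
  qed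
  then show ?thesis
    using complete unfolding norm_complete_def nrm_limit_def by blast
qed

end

section \<open>The direct method\<close>

lemma le_lim_Max_prefix:
  fixes t :: "nat \<Rightarrow> real"
  assumes "convergent (\<lambda>n. Max (t ` {..<n}))"
  shows "t i \<le> lim (\<lambda>n. Max (t ` {..<n}))"
proof (rule LIMSEQ_le_const[OF assms[unfolded convergent_LIMSEQ_iff]])
  show "\<exists>N. \<forall>n\<ge>N. t i \<le> Max (t ` {..<n})"
    by (intro exI[of _ "Suc i"]) (auto intro!: Max_ge)
qed

text \<open>Because \<open>i - 1\<close> is truncated
  subtraction, the terms \<open>0\<close> and \<open>1\<close> both evaluate \<open>\<Psi>\<close> at \<open>x\<close>.\<close>

definition dyadic_term ::
  "('k::field \<Rightarrow> real) \<Rightarrow> ('a::monoid_add \<Rightarrow> real) \<Rightarrow> 'a \<Rightarrow> nat \<Rightarrow> real" where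
  "dyadic_term v \<Psi> x = (\<lambda>i. (1 / v (8 ^ i)) * \<Psi> (nsmul (2 ^ (i - 1)) x))"

context nonarch_valued
begin

lemma dyadic_term_nonneg: "(\<And>u. 0 \<le> \<Psi> u) \<Longrightarrow> 0 \<le> dyadic_term v \<Psi> x i"
  by (simp add: dyadic_term_def val_nonneg)

lemma dyadic_term_nsmul_pow2:
  assumes "(2::'k) \<noteq> 0" and "0 < i"
  shows "dyadic_term v \<Psi> (nsmul (2 ^ n) x) i = v (8 ^ n) * dyadic_term v \<Psi> x (i + n)"
proof -
  have "i - 1 + n = i + n - 1" using assms(2) by simp
  then have "nsmul (2 ^ (i - 1)) (nsmul (2 ^ n) x) = nsmul (2 ^ (i + n - 1)) x"
    by (simp only: flip: nsmul_mult power_add)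
  moreover have "0 < v ((8::'k) ^ n)"
    using val_pos eight_neq_zero[OF assms(1)] by simp
  ultimately show ?thesis
    by (simp add: dyadic_term_def power_add val_mult)
qed

lemma dyadic_term_0_le:
  assumes "(2::'k) \<noteq> 0" and "\<And>u. 0 \<le> \<Psi> u"
  shows "dyadic_term v \<Psi> (nsmul (2 ^ n) x) 0 \<le> v (8 ^ n) * dyadic_term v \<Psi> x (Suc n)"
proof -
  have "0 < v (8::'k)" and "v (8::'k) \<le> 1"
    using val_pos eight_neq_zero[OF assms(1)] val_of_nat_le[of 8] by simp_all
  then have "\<Psi> (nsmul (2 ^ n) x) \<le> \<Psi> (nsmul (2 ^ n) x) / v 8"
    using assms(2) by (simp add: le_divide_eq mult_left_le)
  also have "\<dots> = v (8 ^ n) * dyadic_term v \<Psi> x (Suc n)"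
    using \<open>0 < v 8\<close> by (simp add: dyadic_term_def val_power)
  finally show ?thesis
    by (simp add: dyadic_term_def)
qed

lemma Max_dyadic_window:
  assumes "(2::'k) \<noteq> 0" and "\<And>u. 0 \<le> \<Psi> u" and "2 \<le> m"
  shows "Max (dyadic_term v \<Psi> (nsmul (2 ^ n) x) ` {..<m}) \<le> v (8 ^ n) * Max (dyadic_term v \<Psi> x ` {n..<m + n})"
proof -
  let ?T = "Max (dyadic_term v \<Psi> x ` {n..<m + n})"
  have window: "dyadic_term v \<Psi> x j \<le> ?T" if "n \<le> j" "j < m + n" for j
    using that by (intro Max_ge) auto
  have each: "dyadic_term v \<Psi> (nsmul (2 ^ n) x) i \<le> v (8 ^ n) * ?T" if "i < m" for i
  proof (cases "i = 0")
    case True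
    have "dyadic_term v \<Psi> x (Suc n) \<le> ?T"
      using assms(3) by (intro window) auto
    then have "v (8 ^ n) * dyadic_term v \<Psi> x (Suc n) \<le> v (8 ^ n) * ?T"
      by (simp add: mult_left_mono val_nonneg)
    moreover have "dyadic_term v \<Psi> (nsmul (2 ^ n) x) 0 \<le> v (8 ^ n) * dyadic_term v \<Psi> x (Suc n)"
      by (rule dyadic_term_0_le[OF assms(1,2)])
    ultimately show ?thesis
      unfolding True by linarith
  next
    case False
    then have "dyadic_term v \<Psi> (nsmul (2 ^ n) x) i = v (8 ^ n) * dyadic_term v \<Psi> x (i + n)"
      by (simp add: dyadic_term_nsmul_pow2[OF assms(1)])
    moreover have "dyadic_term v \<Psi> x (i + n) \<le> ?T"
      using that by (intro window) auto
    ultimately show ?thesis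
      by (simp add: mult_left_mono val_nonneg)
  qed
  show ?thesis
    by (rule Max.boundedI) (use each assms(3) in \<open>auto simp: lessThan_empty_iff\<close>)
qed

lemma lim_dyadic_prefix_nsmul_le:
  assumes "(2::'k) \<noteq> 0" and "\<And>u. 0 \<le> \<Psi> u"
    and "convergent (\<lambda>m. Max (dyadic_term v \<Psi> (nsmul (2 ^ n) x) ` {..<m}))"
    and "convergent (\<lambda>m. Max (dyadic_term v \<Psi> x ` {n..<m + n}))"
  shows "lim (\<lambda>m. Max (dyadic_term v \<Psi> (nsmul (2 ^ n) x) ` {..<m}))
     \<le> v (8 ^ n) * lim (\<lambda>m. Max (dyadic_term v \<Psi> x ` {n..<m + n}))"
proof (rule LIMSEQ_le)
  show "(\<lambda>m. v (8 ^ n) * Max (dyadic_term v \<Psi> x ` {n..<m + n}))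
      \<longlonglongrightarrow> v (8 ^ n) * lim (\<lambda>m. Max (dyadic_term v \<Psi> x ` {n..<m + n}))"
    using assms(4) by (intro tendsto_mult_left) (simp add: convergent_LIMSEQ_iff)
  show "\<exists>N. \<forall>m\<ge>N. Max (dyadic_term v \<Psi> (nsmul (2 ^ n) x) ` {..<m})
      \<le> v (8 ^ n) * Max (dyadic_term v \<Psi> x ` {n..<m + n})"
    using Max_dyadic_window[of \<Psi>, OF assms(1,2)] by blast
qed (use assms(3) in \<open>simp add: convergent_LIMSEQ_iff\<close>)

end

context nonarch_normed
begin

lemma nrm_limit_Dop:
  assumes "\<And>p. nrm_limit (\<lambda>n. g n p) (C p)"
  shows "nrm_limit (\<lambda>n. Dop sc k (g n) x y) (Dop sc k C x y)"
  unfolding Dop_def by (intro nrm_limit_diff nrm_limit_add nrm_limit_scale assms)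

definition rescaled :: "('a::monoid_add \<Rightarrow> 'x) \<Rightarrow> 'a \<Rightarrow> nat \<Rightarrow> 'x" where
  "rescaled h x n = sc (1 / 8 ^ n) (h (nsmul (2 ^ n) x))"

lemma rescaled_0 [simp]: "rescaled h x 0 = h x"
  by (simp add: rescaled_def)

lemma rescaled_uminus:
  "(\<And>z. h (- z) = - h z) \<Longrightarrow> rescaled h (- x) n = - rescaled h (x::'a::ab_group_add) n"
  by (simp add: rescaled_def nsmul_minus)

lemma rescaled_nsmul_2:
  assumes "(2::'k) \<noteq> 0"
  shows "rescaled h (nsmul 2 x) n = sc 8 (rescaled h x (Suc n))"
proof -
  have "nsmul (2 ^ n) (nsmul 2 x) = nsmul (2 ^ Suc n) x"
    by (simp add: mult.commute flip: nsmul_mult)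
  then show ?thesis
    using eight_neq_zero[OF assms] by (simp add: rescaled_def)
qed

lemma Dop_rescaled:
  "Dop sc k (\<lambda>z. rescaled h z n) x y = sc (1 / 8 ^ n) (Dop sc k h (nsmul (2 ^ n) x) (nsmul (2 ^ n) y))"
  unfolding rescaled_def Dop_scale Dop_nsmul ..

lemma nrm_rescaled_Suc_diff_le:
  assumes "(2::'k) \<noteq> 0" and step: "\<And>u. nrm (h (nsmul 2 u) - sc 8 (h u)) \<le> \<Psi> u"
  shows "nrm (rescaled h x (Suc n) - rescaled h x n) \<le> \<Psi> (nsmul (2 ^ n) x) / v (8 ^ Suc n)"
proof -
  let ?z = "nsmul (2 ^ n) x"
  have "rescaled h x (Suc n) - rescaled h x n = sc (1 / 8 ^ Suc n) (h (nsmul 2 ?z) - sc 8 (h ?z))"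
    using eight_neq_zero[OF assms(1)]
    unfolding rescaled_def nsmul_pow2_Suc by (simp add: scale_right_diff_distrib)
  then have "nrm (rescaled h x (Suc n) - rescaled h x n) = nrm (h (nsmul 2 ?z) - sc 8 (h ?z)) / v (8 ^ Suc n)"
    by (simp add: nrm_scale val_divide_1)
  also have "\<dots> \<le> \<Psi> ?z / v (8 ^ Suc n)"
    by (rule divide_right_mono[OF step val_nonneg])
  finally show ?thesis .
qed

lemma rescaled_converges:
  assumes "norm_complete nrm" and "(2::'k) \<noteq> 0"
    and step: "\<And>u. nrm (h (nsmul 2 u) - sc 8 (h u)) \<le> \<Psi> u"
    and lim: "(\<lambda>n. \<Psi> (nsmul (2 ^ n) x) / v (8 ^ Suc n)) \<longlonglongrightarrow> 0"
  shows "\<exists>l. nrm_limit (rescaled h x) l"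
proof (rule nrm_limit_exists[OF assms(1)])
  show "(\<lambda>n. nrm (rescaled h x (Suc n) - rescaled h x n)) \<longlonglongrightarrow> 0"
    by (rule tendsto_sandwich[OF _ _ tendsto_const lim])
      (use nrm_rescaled_Suc_diff_le[where h = h, OF assms(2) step] in \<open>simp_all add: nrm_nonneg\<close>)
qed

lemma nrm_sub_rescaled_limit_le:
  assumes "(2::'k) \<noteq> 0" and step: "\<And>u. nrm (h (nsmul 2 u) - sc 8 (h u)) \<le> \<Psi> u"
    and "nrm_limit (rescaled h x) l"
    and bound: "\<And>n. \<Psi> (nsmul (2 ^ n) x) / v (8 ^ Suc n) \<le> B"
  shows "nrm (h x - l) \<le> B"
proof -
  have "0 \<le> \<Psi> x"
    using nrm_nonneg step[of x] by (rule order_trans)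
  then have "0 \<le> \<Psi> x / v 8"
    by (simp add: val_nonneg)
  moreover have "\<Psi> x / v 8 \<le> B"
    using bound[of 0] by simp
  ultimately have "0 \<le> B" by linarith
  have "nrm (rescaled h x (Suc i) - rescaled h x i) \<le> B" for i
    using nrm_rescaled_Suc_diff_le[where h = h, OF assms(1) step, of x i] bound[of i] by linarith
  then have "nrm (rescaled h x n - rescaled h x 0) \<le> B" for n
    by (rule nrm_telescope[OF le0]) (use \<open>0 \<le> B\<close> in simp_all)
  then show ?thesis
    using nrm_limit_le[OF assms(3)] by simp
qed

lemma cubic_eq_if_same_approximation:
  assumes "(2::'k) \<noteq> 0" and "cubic C" and "cubic C'"
    and approx: "\<And>z. nrm (h z - C z) \<le> \<beta> z" and approx': "\<And>z. nrm (h z - C' z) \<le> \<beta> z"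
    and dilate: "\<And>n. \<beta> (nsmul (2 ^ n) x) \<le> v (8 ^ n) * e n" and "e \<longlonglongrightarrow> 0"
  shows "C x = C' x"
proof -
  have "C x - C' x = 0"
  proof (rule nrm_eq_0_if_le_null[OF _ \<open>e \<longlonglongrightarrow> 0\<close>])
    fix n
    let ?z = "nsmul (2 ^ n) x"
    have "0 < v ((8::'k) ^ n)"
      using val_pos eight_neq_zero[OF assms(1)] by simp
    have "C ?z - C' ?z = sc (8 ^ n) (C x - C' x)"
      by (simp add: cubic_nsmul_pow2[OF assms(1,2)] cubic_nsmul_pow2[OF assms(1,3)]
          scale_right_diff_distrib)
    then have "v (8 ^ n) * nrm (C x - C' x) = nrm ((h ?z - C' ?z) - (h ?z - C ?z))"
      by (simp add: nrm_scale)
    also have "\<dots> \<le> v (8 ^ n) * e n"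
      using nrm_diff_le[OF approx' approx, of ?z] dilate[of n] by simp
    finally show "nrm (C x - C' x) \<le> e n"
      using \<open>0 < v (8 ^ n)\<close> by simp
  qed
  then show ?thesis by simp
qed

lemma doubling_diff_step_bound:
  assumes two: "(2::'k) \<noteq> 0" and odd: "\<And>x. f (- x) = - f x"
    and ineq: "\<And>x y. nrm (Dop sc k f x y) \<le> \<phi> x y"
  shows "v (of_int (k^2 * (k^2 - 1))) * nrm (doubling_diff sc f (nsmul 2 u) - sc 8 (doubling_diff sc f u))
     \<le> Phi v k \<phi> u"
proof -
  let ?P = "Phi v k \<phi> u"
  have mem: "e \<le> ?P" if "e \<in> {
      v (of_int (2 * (k^2 - 1))) * \<phi> u u,
      v (of_int (k^2)) * \<phi> (nsmul 2 u) u,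
      \<phi> u (nsmul 2 u),
      \<phi> (zsmul (k + 1) u) u,
      \<phi> (zsmul (k - 1) u) u,
      \<phi> u u,
      v (of_int (k^2)) * \<phi> (nsmul 2 u) (nsmul 2 u),
      v (of_int (2 * (k^2 - 1))) * \<phi> u (nsmul 2 u),
      \<phi> u (nsmul 3 u),
      \<phi> (zsmul (2 * k + 1) u) u,
      \<phi> (zsmul (2 * k - 1) u) u}" for e
    unfolding Phi_def by (rule Max_ge) (use that in auto)
  have plain: "nrm (sc (of_int c) (Dop sc k f x y)) \<le> ?P" if "\<phi> x y \<le> ?P" for c x y
    using nrm_scale_of_int_le[of c "Dop sc k f x y"] ineq[of x y] that by linarith
  have weighted: "nrm (sc (of_int c) (Dop sc k f x y)) \<le> ?P"
    if "k^2 dvd c" and "v (of_int (k^2)) * \<phi> x y \<le> ?P" for c x y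
    using nrm_scale_of_int_dvd_le[OF that(1), of "Dop sc k f x y"]
      mult_left_mono[OF ineq[of x y] val_nonneg[of "of_int (k^2)"]] that(2)
    by linarith
  have "nrm (sc (of_int (4 * k^2 - 3)) (Dop sc k f u u)) \<le> ?P"
    and "nrm (sc (of_int (2 * k^2)) (Dop sc k f u (nsmul 2 u))) \<le> ?P"
    and "nrm (sc (of_int (- 2)) (Dop sc k f (zsmul (k + 1) u) u)) \<le> ?P"
    and "nrm (sc (of_int 2) (Dop sc k f (zsmul (k - 1) u) u)) \<le> ?P"
    by (rule plain, rule mem, simp)+
  moreover have "nrm (sc (of_int (- 2 * k^2)) (Dop sc k f (nsmul 2 u) u)) \<le> ?P"
    and "nrm (sc (of_int (- (k^2))) (Dop sc k f (nsmul 2 u) (nsmul 2 u))) \<le> ?P"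
    by (rule weighted, simp, rule mem, simp)+
  moreover have "nrm (Dop sc k f u (nsmul 3 u)) \<le> ?P"
    and "nrm (Dop sc k f (zsmul (2 * k + 1) u) u) \<le> ?P"
    and "nrm (Dop sc k f (zsmul (2 * k - 1) u) u) \<le> ?P"
    by (rule order_trans[OF ineq], rule mem, simp)+
  ultimately have "nrm (sc (of_int (k^2 * (k^2 - 1)))
      (doubling_diff sc f (nsmul 2 u) - sc 8 (doubling_diff sc f u))) \<le> ?P"
    unfolding doubling_diff_step_eq[where f = f, OF vector_space_axioms two odd]
    by (intro nrm_add_le nrm_diff_le)
  then show ?thesis by (simp add: nrm_scale)
qed

end

locale cubic_stability = nonarch_normed v sc nrm
  for v :: "'k::field \<Rightarrow> real" and sc :: "'k \<Rightarrow> 'x::ab_group_add \<Rightarrow> 'x" and nrm +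
  fixes k :: int and \<phi> :: "'a::ab_group_add \<Rightarrow> 'a \<Rightarrow> real" and f :: "'a \<Rightarrow> 'x"
  assumes complete: "norm_complete nrm"
    and two_ne_0: "(2::'k) \<noteq> 0" and kk_ne_0: "(of_int (k^2 * (k^2 - 1)) :: 'k) \<noteq> 0"
    and phi_nonneg: "\<And>x y. 0 \<le> \<phi> x y"
    and Dop_lim: "\<And>x y. (\<lambda>n. (1 / v (8 ^ n)) *
                 max (\<phi> (nsmul (2 ^ (n + 1)) x) (nsmul (2 ^ (n + 1)) y))
                     (v 2 * \<phi> (nsmul (2 ^ n) x) (nsmul (2 ^ n) y))) \<longlonglongrightarrow> 0"
    and Phi_lim: "\<And>x. (\<lambda>n. (1 / v (8 ^ n * of_int (k^2 * (k^2 - 1)))) *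
                 Phi v k \<phi> (nsmul (2 ^ (n - 1)) x)) \<longlonglongrightarrow> 0"
    and Phi_conv: "\<And>x. convergent (\<lambda>n. Max (dyadic_term v (Phi v k \<phi>) x ` {..<n}))"
    and odd: "\<And>x. f (- x) = - f x"
    and Dop_le: "\<And>x y. nrm (Dop sc k f x y) \<le> \<phi> x y"
begin

abbreviation h :: "'a \<Rightarrow> 'x" where
  "h \<equiv> doubling_diff sc f"

abbreviation \<Psi> :: "'a \<Rightarrow> real" where
  "\<Psi> u \<equiv> Phi v k \<phi> u / v (of_int (k^2 * (k^2 - 1)))"

definition cubic_approx :: "'a \<Rightarrow> 'x" where
  "cubic_approx x = (THE l. nrm_limit (rescaled h x) l)"

lemma Phi_nonneg: "0 \<le> Phi v k \<phi> u"
proof -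
  have "\<phi> u u \<le> Phi v k \<phi> u"
    unfolding Phi_def by (rule Max_ge) auto
  then show ?thesis using phi_nonneg[of u u] by linarith
qed

lemma val_kk_pos: "0 < v (of_int (k^2 * (k^2 - 1)))"
  using val_pos[OF kk_ne_0] .

lemma h_step: "nrm (h (nsmul 2 u) - sc 8 (h u)) \<le> \<Psi> u"
  using doubling_diff_step_bound[OF two_ne_0 odd Dop_le, of u] val_kk_pos
  by (simp add: field_simps)

lemma h_step_lim: "(\<lambda>n. \<Psi> (nsmul (2 ^ n) x) / v (8 ^ Suc n)) \<longlonglongrightarrow> 0"
proof -
  have "(1 / v (8 ^ Suc n * of_int (k^2 * (k^2 - 1)))) * Phi v k \<phi> (nsmul (2 ^ (Suc n - 1)) x)
      = \<Psi> (nsmul (2 ^ n) x) / v (8 ^ Suc n)" for n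
    by (simp only: val_mult diff_Suc_1) (simp add: mult.commute)
  then show ?thesis
    using LIMSEQ_Suc[OF Phi_lim[of x]] by (simp only:)
qed

lemma nrm_limit_cubic_approx: "nrm_limit (rescaled h x) (cubic_approx x)"
proof -
  obtain l where l: "nrm_limit (rescaled h x) l"
    using rescaled_converges[OF complete two_ne_0 h_step h_step_lim] by blast
  then show ?thesis
    unfolding cubic_approx_def by (rule theI) (erule nrm_limit_unique[OF _ l])
qed

lemma cubic_approx_uminus: "cubic_approx (- x) = - cubic_approx x"
proof -
  have "h (- z) = - h z" for z
    by (simp add: doubling_diff_def nsmul_minus odd)
  then have "rescaled h (- x) = (\<lambda>n. - rescaled h x n)"
    by (intro ext rescaled_uminus)
  then have "nrm_limit (rescaled h (- x)) (- cubic_approx x)"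
    using nrm_limit_uminus[OF nrm_limit_cubic_approx] by simp
  then show ?thesis
    by (rule nrm_limit_unique[OF nrm_limit_cubic_approx])
qed

lemma cubic_approx_nsmul_2: "cubic_approx (nsmul 2 x) = sc 8 (cubic_approx x)"
proof -
  have "rescaled h (nsmul 2 x) = (\<lambda>n. sc 8 (rescaled h x (Suc n)))"
    by (intro ext rescaled_nsmul_2[OF two_ne_0])
  then have "nrm_limit (rescaled h (nsmul 2 x)) (sc 8 (cubic_approx x))"
    using nrm_limit_scale[OF nrm_limit_Suc[OF nrm_limit_cubic_approx]] by simp
  then show ?thesis
    by (rule nrm_limit_unique[OF nrm_limit_cubic_approx])
qed

lemma nrm_Dop_rescaled_le:
  "nrm (Dop sc k (\<lambda>z. rescaled h z n) x y) \<le> (1 / v (8 ^ n)) *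
     max (\<phi> (nsmul (2 ^ (n + 1)) x) (nsmul (2 ^ (n + 1)) y)) (v 2 * \<phi> (nsmul (2 ^ n) x) (nsmul (2 ^ n) y))"
proof -
  let ?A = "Dop sc k f (nsmul (2 ^ (n + 1)) x) (nsmul (2 ^ (n + 1)) y)"
  let ?B = "Dop sc k f (nsmul (2 ^ n) x) (nsmul (2 ^ n) y)"
  have "Dop sc k (\<lambda>z. rescaled h z n) x y = sc (1 / 8 ^ n) (?A - sc 2 ?B)"
    by (simp add: Dop_rescaled Dop_doubling_diff flip: nsmul_pow2_Suc)
  then have "nrm (Dop sc k (\<lambda>z. rescaled h z n) x y) = (1 / v (8 ^ n)) * nrm (?A - sc 2 ?B)"
    by (simp add: nrm_scale val_divide_1)
  also have "\<dots> \<le> (1 / v (8 ^ n)) * max (nrm ?A) (v 2 * nrm ?B)"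
    using nrm_add_le_max[of ?A "- sc 2 ?B"]
    by (intro mult_left_mono) (simp_all add: nrm_scale val_nonneg)
  also have "\<dots> \<le> (1 / v (8 ^ n)) *
     max (\<phi> (nsmul (2 ^ (n + 1)) x) (nsmul (2 ^ (n + 1)) y)) (v 2 * \<phi> (nsmul (2 ^ n) x) (nsmul (2 ^ n) y))"
    by (intro mult_left_mono max.mono Dop_le) (simp_all add: val_nonneg)
  finally show ?thesis .
qed

lemma Dop_cubic_approx: "Dop sc k cubic_approx x y = 0"
proof -
  have "nrm_limit (\<lambda>n. Dop sc k (\<lambda>z. rescaled h z n) x y) (Dop sc k cubic_approx x y)"
    by (rule nrm_limit_Dop) (rule nrm_limit_cubic_approx)
  moreover have "(\<lambda>n. nrm (Dop sc k (\<lambda>z. rescaled h z n) x y)) \<longlonglongrightarrow> 0"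
    by (rule tendsto_sandwich[OF _ _ tendsto_const Dop_lim[of x y]])
      (intro always_eventually allI nrm_nonneg nrm_Dop_rescaled_le)+
  then have "nrm_limit (\<lambda>n. Dop sc k (\<lambda>z. rescaled h z n) x y) 0"
    unfolding nrm_limit_def by simp
  ultimately show ?thesis
    by (rule nrm_limit_unique)
qed

lemma cubic_cubic_approx: "cubic cubic_approx"
  by (rule cubicI[OF vector_space_axioms two_ne_0 kk_ne_0 cubic_approx_uminus
        cubic_approx_nsmul_2 Dop_cubic_approx])

lemma nrm_h_sub_cubic_approx_le:
  "nrm (h x - cubic_approx x)
     \<le> (1 / v (8 * of_int (k^2 * (k^2 - 1)))) * lim (\<lambda>n. Max (dyadic_term v (Phi v k \<phi>) x ` {..<n}))"
proof (rule nrm_sub_rescaled_limit_le[OF two_ne_0 h_step nrm_limit_cubic_approx])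
  fix n
  let ?L = "lim (\<lambda>n. Max (dyadic_term v (Phi v k \<phi>) x ` {..<n}))"
  have "0 < v (8::'k)"
    using val_pos[OF eight_neq_zero[OF two_ne_0]] .
  have "\<Psi> (nsmul (2 ^ n) x) / v (8 ^ Suc n) = dyadic_term v (Phi v k \<phi>) x (Suc n) / v (of_int (k^2 * (k^2 - 1)))"
    by (simp add: dyadic_term_def)
  also have "\<dots> \<le> ?L / v (of_int (k^2 * (k^2 - 1)))"
    using le_lim_Max_prefix[OF Phi_conv] val_kk_pos by (simp add: divide_right_mono)
  also have "\<dots> \<le> ?L / (v 8 * v (of_int (k^2 * (k^2 - 1))))"
  proof (rule divide_left_mono)
    show "0 \<le> ?L"
      using le_lim_Max_prefix[OF Phi_conv[of x], of 0] dyadic_term_nonneg[of "Phi v k \<phi>" x 0, OF Phi_nonneg]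
      by linarith
    show "v 8 * v (of_int (k^2 * (k^2 - 1))) \<le> v (of_int (k^2 * (k^2 - 1)))"
      using val_of_nat_le[of 8] val_kk_pos by (simp add: mult_left_le_one_le)
  qed (intro mult_pos_pos \<open>0 < v 8\<close> val_kk_pos)
  also have "\<dots> = (1 / v (8 * of_int (k^2 * (k^2 - 1)))) * ?L"
    by (simp add: val_mult)
  finally show "\<Psi> (nsmul (2 ^ n) x) / v (8 ^ Suc n) \<le> (1 / v (8 * of_int (k^2 * (k^2 - 1)))) * ?L" .
qed

lemma cubic_approx_unique:
  assumes windows: "\<And>x. (\<forall>i. convergent (\<lambda>n. Max (dyadic_term v (Phi v k \<phi>) x ` {i..<n + i}))) \<and>
        (\<lambda>i. lim (\<lambda>n. Max (dyadic_term v (Phi v k \<phi>) x ` {i..<n + i}))) \<longlonglongrightarrow> 0"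
    and "cubic C"
    and approx: "\<And>x. nrm (h x - C x) \<le> (1 / v (8 * of_int (k^2 * (k^2 - 1)))) *
        lim (\<lambda>n. Max (dyadic_term v (Phi v k \<phi>) x ` {..<n}))"
  shows "C = cubic_approx"
proof
  fix x
  let ?c = "1 / v (8 * of_int (k^2 * (k^2 - 1)) :: 'k)"
  let ?U = "\<lambda>i. lim (\<lambda>n. Max (dyadic_term v (Phi v k \<phi>) x ` {i..<n + i}))"
  have "0 \<le> ?c" by (simp add: val_nonneg)
  have "?c * lim (\<lambda>m. Max (dyadic_term v (Phi v k \<phi>) (nsmul (2 ^ n) x) ` {..<m})) \<le> v (8 ^ n) * (?c * ?U n)"
    for n
  proof -
    have "lim (\<lambda>m. Max (dyadic_term v (Phi v k \<phi>) (nsmul (2 ^ n) x) ` {..<m})) \<le> v (8 ^ n) * ?U n"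
      using lim_dyadic_prefix_nsmul_le[of "Phi v k \<phi>", OF two_ne_0 Phi_nonneg Phi_conv] windows[of x] by blast
    then show ?thesis
      by (subst mult.left_commute) (rule mult_left_mono[OF _ \<open>0 \<le> ?c\<close>])
  qed
  moreover have "(\<lambda>n. ?c * ?U n) \<longlonglongrightarrow> 0"
    using windows[of x] by (intro tendsto_mult_right_zero) blast
  ultimately show "C x = cubic_approx x"
    by (rule cubic_eq_if_same_approximation[OF two_ne_0 \<open>cubic C\<close> cubic_cubic_approx approx
          nrm_h_sub_cubic_approx_le])
qed

end

theorem theorem2p3:
  fixes v :: "'k::field \<Rightarrow> real"
    and sc :: "'k \<Rightarrow> 'x::ab_group_add \<Rightarrow> 'x"
    and nrm :: "'x \<Rightarrow> real"
    and k :: int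
    and \<phi> :: "'a::ab_group_add \<Rightarrow> 'a \<Rightarrow> real"
    and f :: "'a \<Rightarrow> 'x"
  assumes val: "nonarch_valuation v" and nontriv: "nontrivial_valuation v"
    and space: "nonarch_normed_space v sc nrm" and complete: "norm_complete nrm"
    and k: "k \<noteq> 0" "k \<noteq> 1" "k \<noteq> -1"
    and two_ne0: "(2::'k) \<noteq> 0" and kk_ne0: "(of_int (k^2 * (k^2 - 1)) :: 'k) \<noteq> 0"
    and phi_nonneg: "\<And>x y. 0 \<le> \<phi> x y"
    and lim1: "\<And>x y. (\<lambda>n. (1 / v (8 ^ n)) *
                 max (\<phi> (nsmul (2 ^ (n + 1)) x) (nsmul (2 ^ (n + 1)) y))
                     (v 2 * \<phi> (nsmul (2 ^ n) x) (nsmul (2 ^ n) y))) \<longlonglongrightarrow> 0"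
    and lim2: "\<And>x. (\<lambda>n. (1 / v (8 ^ n * of_int (k^2 * (k^2 - 1)))) *
                 Phi v k \<phi> (nsmul (2 ^ (n - 1)) x)) \<longlonglongrightarrow> 0"
    and conv: "\<And>x. convergent (\<lambda>n. Max ((\<lambda>i. (1 / v (8 ^ i)) * Phi v k \<phi> (nsmul (2 ^ (i - 1)) x)) ` {..<n}))"
    and odd: "\<And>x. f (- x) = - f x"
    and ineq: "\<And>x y. nrm (Dop sc k f x y) \<le> \<phi> x y"
  shows "\<exists>C. cubic C \<and>
     (\<forall>x. nrm (f (nsmul 2 x) - sc 2 (f x) - C x)
            \<le> (1 / v (8 * of_int (k^2 * (k^2 - 1)))) *
              lim (\<lambda>n. Max ((\<lambda>i. (1 / v (8 ^ i)) * Phi v k \<phi> (nsmul (2 ^ (i - 1)) x)) ` {..<n}))) \<and>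
     ((\<forall>x. (\<forall>i. convergent (\<lambda>n. Max ((\<lambda>j. (1 / v (8 ^ j)) * Phi v k \<phi> (nsmul (2 ^ (j - 1)) x)) ` {i..<n + i})))
           \<and> (\<lambda>i. lim (\<lambda>n. Max ((\<lambda>j. (1 / v (8 ^ j)) * Phi v k \<phi> (nsmul (2 ^ (j - 1)) x)) ` {i..<n + i}))) \<longlonglongrightarrow> 0)
      \<longrightarrow> (\<forall>C'. cubic C' \<and>
             (\<forall>x. nrm (f (nsmul 2 x) - sc 2 (f x) - C' x)
                   \<le> (1 / v (8 * of_int (k^2 * (k^2 - 1)))) *
                     lim (\<lambda>n. Max ((\<lambda>i. (1 / v (8 ^ i)) * Phi v k \<phi> (nsmul (2 ^ (i - 1)) x)) ` {..<n})))
           \<longrightarrow> C' = C))"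
proof -
  interpret cubic_stability v sc nrm k \<phi> f
    by unfold_locales (simp_all only: assms dyadic_term_def[abs_def] not_False_eq_True)
  show ?thesis
    using cubic_cubic_approx nrm_h_sub_cubic_approx_le cubic_approx_unique
    unfolding doubling_diff_def dyadic_term_def[abs_def] by blast
qed

end
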